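(* Let $k$ be a positive integer, $G>0$, and let $g_1,\dots,g_k$ be strongly additive functions with $0\le g_j(p)\le G$ for all $j$ and all $p\in\mathcal P$, and assume $\mathfrak K=\max_{1\le i\le k}\sigma^{\mathcal P}(g_i)^2\ge1$. Then $$S:=\sum_{\substack{p_1,\dots,p_k\in\mathcal P\\ p_1\cdots p_k\text{ squarefull}\\ \#\{p_1,\dots,p_k\}<k/2}}H(p_1\cdots p_k)g_1(p_1)\cdots g_k(p_k)$$ satisfies $S\ll\mathfrak K^{k/2-1}$ if $k$ is even and $S\ll\mathfrak K^{(k-1)/2}$ if $k$ is odd, with implied constants depending only on $k$ and $G$.
   Context: $\mathcal P$ is a finite set of primes and $h$ is multiplicative with $0\le h(d)\le d$. Strongly additive: $g(n)=\sum_{p\mid n}g(p)$. $\sigma^{\mathcal P}(g)^2=\sum_{p\in\mathcal P}g(p)^2\frac{h(p)}p\big(1-\frac{h(p)}p\big)$. $H$ is multiplicative with $H(p^\alpha)=\frac{h(p)}p\big(1-\frac{h(p)}p\big)^\alpha+\big(-\frac{h(p)}p\big)^\alpha\big(1-\frac{h(p)}p\big)$. The sum is over ordered $k$-tuples; squarefull means every prime divisor appears at least squared. *)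

theory Defs
  imports "HOL-Computational_Algebra.Primes" "HOL-Analysis.Analysis"
begin

definition multiplicative_fn :: "(nat \<Rightarrow> real) \<Rightarrow> bool" where
  "multiplicative_fn f \<longleftrightarrow> f 1 = 1 \<and>
     (\<forall>m n. m > 0 \<longrightarrow> n > 0 \<longrightarrow> coprime m n \<longrightarrow> f (m * n) = f m * f n)"

definition strongly_additive :: "(nat \<Rightarrow> real) \<Rightarrow> bool" where
  "strongly_additive g \<longleftrightarrow> (\<forall>n. n > 0 \<longrightarrow> g n = (\<Sum>p\<in>prime_factors n. g p))"

definition squarefull :: "nat \<Rightarrow> bool" where
  "squarefull n \<longleftrightarrow> (\<forall>q. prime q \<longrightarrow> q dvd n \<longrightarrow> q^2 dvd n)"

definition Hpp :: "(nat \<Rightarrow> real) \<Rightarrow> nat \<Rightarrow> nat \<Rightarrow> real" where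
  "Hpp h p a = (h p / p) * (1 - h p / p) ^ a + (- (h p / p)) ^ a * (1 - h p / p)"

definition Hfun :: "(nat \<Rightarrow> real) \<Rightarrow> nat \<Rightarrow> real" where
  "Hfun h n = (\<Prod>p\<in>prime_factors n. Hpp h p (multiplicity p n))"

definition sigmaP_sq :: "nat set \<Rightarrow> (nat \<Rightarrow> real) \<Rightarrow> (nat \<Rightarrow> real) \<Rightarrow> real" where
  "sigmaP_sq P h g = (\<Sum>p\<in>P. (g p)^2 * (h p / p) * (1 - h p / p))"

end

theory Submission
  imports Defs
begin

text \<open>Group the tuples \<open>(p\<^sub>1, \<dots>, p\<^sub>k)\<close> according to the partition of the indices into
classes of equal primes. On a tuple with distinct primes \<open>q\<^sub>1, \<dots>, q\<^sub>s\<close> one has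
\<open>\<bar>H(p\<^sub>1\<cdots>p\<^sub>k)\<bar> \<le> \<Prod> h(q\<^sub>i)/q\<^sub>i (1 - h(q\<^sub>i)/q\<^sub>i)\<close>, so for a fixed partition into \<open>s\<close> classes the
sum factors into \<open>s\<close> sums over \<open>P\<close>, one per class. Squarefullness means every class has at
least two indices; bounding all but two of the corresponding \<open>g\<^sub>j\<close> by \<open>G\<close> and the remaining
two by AM-GM, each class sum is at most \<open>G\<^sup>k \<frak>K\<close>. As \<open>s < k/2\<close> means
\<open>s \<le> \<lfloor>(k-1)/2\<rfloor>\<close>, and there are at most \<open>k\<^sup>k\<close> partitions, the sum is at most
\<open>k\<^sup>k (G\<^sup>k \<frak>K)\<^bsup>\<lfloor>(k-1)/2\<rfloor>\<^esup>\<close>.\<close>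

definition density_variance :: "(nat \<Rightarrow> real) \<Rightarrow> nat \<Rightarrow> real" where
  "density_variance h p = h p / p * (1 - h p / p)"

lemma density_variance_nonneg:
  assumes "0 \<le> h p / p" "h p / p \<le> 1"
  shows "0 \<le> density_variance h p"
  using assms unfolding density_variance_def by (intro mult_nonneg_nonneg) simp_all

lemma sigmaP_sq_eq: "sigmaP_sq P h g = (\<Sum>p\<in>P. (g p)^2 * density_variance h p)"
  by (simp add: sigmaP_sq_def density_variance_def mult.assoc)

lemma abs_Hpp_le:
  assumes "0 \<le> h p / p" "h p / p \<le> 1" "a \<ge> 1"
  shows "\<bar>Hpp h p a\<bar> \<le> density_variance h p"
proof -
  define x where "x = h p / p"
  have x: "0 \<le> x" "x \<le> 1" using assms unfolding x_def by auto
  show ?thesis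
  proof (cases "a = 1")
    case True
    have "0 \<le> x * (1 - x)" using x by simp
    then show ?thesis using True by (simp add: Hpp_def density_variance_def x_def)
  next
    case False
    then obtain b where a: "a = Suc (Suc b)" using assms(3) by (cases a) (auto simp: gr0_conv_Suc)
    have "x * (1-x)^a + x^a * (1-x) = x * (1-x) * ((1-x)^Suc b + x^Suc b)"
      by (simp add: a algebra_simps)
    also have "\<dots> \<le> x * (1-x) * ((1-x) + x)"
      using x by (intro mult_left_mono add_mono) (simp_all add: mult_left_le power_le_one)
    finally have "x * (1-x)^a + x^a * (1-x) \<le> x * (1-x)" by simp
    moreover have "\<bar>x * (1-x)^a + (-x)^a * (1-x)\<bar> \<le> x * (1-x)^a + x^a * (1-x)"
      using x abs_triangle_ineq[of "x * (1-x)^a" "(-x)^a * (1-x)"] by (simp add: abs_mult power_abs)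
    ultimately show ?thesis by (simp add: Hpp_def density_variance_def x_def)
  qed
qed

lemma multiplicity_prod_primes:
  fixes ps :: "'a \<Rightarrow> nat"
  assumes "finite J" "\<forall>j\<in>J. prime (ps j)" "prime q"
  shows "multiplicity q (\<Prod>j\<in>J. ps j) = card {j\<in>J. ps j = q}"
proof -
  have "multiplicity q (\<Prod>j\<in>J. ps j) = (\<Sum>j\<in>J. multiplicity q (ps j))"
    using assms by (intro prime_elem_multiplicity_prod_distrib) (auto dest: prime_gt_0_nat)
  also have "\<dots> = (\<Sum>j\<in>J. if ps j = q then 1 else 0)"
    using assms by (intro sum.cong) (auto simp: prime_multiplicity_other)
  also have "\<dots> = card {j\<in>J. ps j = q}"
    using assms by (simp add: sum.If_cases Int_def conj_commute)
  finally show ?thesis .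
qed

lemma prime_factors_prod_primes:
  fixes ps :: "'a \<Rightarrow> nat"
  assumes "finite J" "\<forall>j\<in>J. prime (ps j)"
  shows "prime_factors (\<Prod>j\<in>J. ps j) = ps ` J"
proof -
  have "prime_factors (\<Prod>j\<in>J. ps j) = \<Union>((prime_factors \<circ> ps) ` J)"
    using assms by (intro prime_factors_prod) (auto dest: prime_gt_0_nat)
  also have "\<dots> = ps ` J" using assms by (auto simp: prime_prime_factors)
  finally show ?thesis .
qed

lemma abs_Hfun_prod_primes_le:
  fixes ps :: "'a \<Rightarrow> nat"
  assumes "finite J" "\<forall>j\<in>J. prime (ps j)"
    and "\<forall>j\<in>J. 0 \<le> h (ps j) / ps j \<and> h (ps j) / ps j \<le> 1"
  shows "\<bar>Hfun h (\<Prod>j\<in>J. ps j)\<bar> \<le> (\<Prod>q\<in>ps ` J. density_variance h q)"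
proof -
  have pf: "prime_factors (\<Prod>j\<in>J. ps j) = ps ` J"
    using assms(1,2) by (rule prime_factors_prod_primes)
  have "\<bar>Hfun h (\<Prod>j\<in>J. ps j)\<bar> = (\<Prod>q\<in>ps ` J. \<bar>Hpp h q (multiplicity q (\<Prod>j\<in>J. ps j))\<bar>)"
    unfolding Hfun_def pf by (simp add: abs_prod)
  also have "\<dots> \<le> (\<Prod>q\<in>ps ` J. density_variance h q)"
  proof (intro prod_mono conjI abs_ge_zero abs_Hpp_le)
    fix q assume q: "q \<in> ps ` J"
    then show "0 \<le> h q / q" "h q / q \<le> 1" using assms(3) by auto
    have "q \<in> prime_factors (\<Prod>j\<in>J. ps j)" using q pf by simp
    then show "multiplicity q (\<Prod>j\<in>J. ps j) \<ge> 1"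
      by (simp add: prime_factors_multiplicity Suc_le_eq)
  qed
  finally show ?thesis .
qed

lemma squarefull_prod_primes_class_card:
  fixes ps :: "'a \<Rightarrow> nat"
  assumes "finite J" "\<forall>j\<in>J. prime (ps j)" "squarefull (\<Prod>j\<in>J. ps j)" "i \<in> J"
  shows "card {j\<in>J. ps j = ps i} \<ge> 2"
proof -
  have q: "prime (ps i)" using assms by auto
  have "ps i dvd (\<Prod>j\<in>J. ps j)" using assms by (intro dvd_prodI)
  then have "(ps i)^2 dvd (\<Prod>j\<in>J. ps j)" using assms(3) q unfolding squarefull_def by blast
  moreover have "(\<Prod>j\<in>J. ps j) > 0" using assms(2) by (intro prod_pos) (auto dest: prime_gt_0_nat)
  ultimately have "2 \<le> multiplicity (ps i) (\<Prod>j\<in>J. ps j)"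
    using q by (intro multiplicity_geI) (auto simp: not_prime_unit)
  also have "\<dots> = card {j\<in>J. ps j = ps i}"
    using assms q by (intro multiplicity_prod_primes)
  finally show ?thesis .
qed

lemma sum_weighted_prod_le:
  fixes w :: "'b \<Rightarrow> real" and g :: "'a \<Rightarrow> 'b \<Rightarrow> real"
  assumes "finite F" "card F \<ge> 2" and w: "\<forall>x\<in>P. 0 \<le> w x"
    and g: "\<forall>j\<in>F. \<forall>x\<in>P. 0 \<le> g j x \<and> g j x \<le> M" and "M \<ge> 1"
    and K: "\<forall>j\<in>F. (\<Sum>x\<in>P. (g j x)^2 * w x) \<le> K"
  shows "(\<Sum>x\<in>P. w x * (\<Prod>j\<in>F. g j x)) \<le> M ^ (card F - 2) * K"
proof -
  obtain a b where ab: "a \<in> F" "b \<in> F" "a \<noteq> b"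
    using assms(1,2) by (metis card_le_Suc0_iff_eq not_less_eq_eq numeral_2_eq_2)
  define F' where "F' = F - {a, b}"
  have F: "F = insert a (insert b F')" "a \<notin> insert b F'" "b \<notin> F'" "finite F'"
    using ab assms(1) unfolding F'_def by auto
  have cF': "card F' = card F - 2" using F by simp
  have pt: "w x * (\<Prod>j\<in>F. g j x) \<le> M ^ (card F - 2) * (((g a x)^2 * w x + (g b x)^2 * w x) / 2)"
    if x: "x \<in> P" for x
  proof -
    have gF': "\<forall>j\<in>F'. 0 \<le> g j x \<and> g j x \<le> M" using g x unfolding F'_def by blast
    have rest: "0 \<le> (\<Prod>j\<in>F'. g j x)" "(\<Prod>j\<in>F'. g j x) \<le> M ^ (card F - 2)"
      using gF' prod_mono[of F' "\<lambda>j. g j x" "\<lambda>_. M"] by (auto simp: cF' intro: prod_nonneg)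
    have amgm: "g a x * g b x \<le> ((g a x)^2 + (g b x)^2) / 2"
      using sum_squares_ge_zero[of "g a x - g b x" 0] by (simp add: power2_eq_square algebra_simps)
    have nonneg: "0 \<le> w x" "0 \<le> g a x" "0 \<le> g b x" using w g ab x by auto
    have "w x * (\<Prod>j\<in>F. g j x) = (w x * (g a x * g b x)) * (\<Prod>j\<in>F'. g j x)"
      using F by (simp add: mult_ac)
    also have "\<dots> \<le> (w x * (((g a x)^2 + (g b x)^2) / 2)) * M ^ (card F - 2)"
      using rest nonneg amgm by (intro mult_mono mult_left_mono) auto
    finally show ?thesis by (simp add: algebra_simps)
  qed
  have "(\<Sum>x\<in>P. w x * (\<Prod>j\<in>F. g j x))
      \<le> (\<Sum>x\<in>P. M ^ (card F - 2) * (((g a x)^2 * w x + (g b x)^2 * w x) / 2))"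
    using pt by (intro sum_mono) auto
  also have "\<dots> = M ^ (card F - 2) * (((\<Sum>x\<in>P. (g a x)^2 * w x) + (\<Sum>x\<in>P. (g b x)^2 * w x)) / 2)"
    by (simp add: sum_distrib_left[symmetric] sum_divide_distrib[symmetric] sum.distrib)
  also have "\<dots> \<le> M ^ (card F - 2) * ((K + K) / 2)"
    using K ab \<open>M \<ge> 1\<close> by (intro mult_left_mono divide_right_mono add_mono) auto
  finally show ?thesis by simp
qed

text \<open>\<open>least_rep J ps\<close> encodes the partition of \<open>J\<close> into classes of equal entries of \<open>ps\<close>,
each class being named by its least index.\<close>

definition least_rep :: "nat set \<Rightarrow> (nat \<Rightarrow> 'a) \<Rightarrow> nat \<Rightarrow> nat" where
  "least_rep J ps = restrict (\<lambda>j. LEAST i. i \<in> J \<and> ps i = ps j) J"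

lemma least_rep_mem:
  assumes "j \<in> J"
  shows "least_rep J ps j \<in> J" "ps (least_rep J ps j) = ps j"
proof -
  have "\<exists>i. i \<in> J \<and> ps i = ps j" using assms by blast
  from LeastI_ex[OF this] show "least_rep J ps j \<in> J" "ps (least_rep J ps j) = ps j"
    using assms unfolding least_rep_def by simp_all
qed

lemma least_rep_eq_iff:
  assumes "j \<in> J" "j' \<in> J"
  shows "least_rep J ps j = least_rep J ps j' \<longleftrightarrow> ps j = ps j'"
proof
  assume "least_rep J ps j = least_rep J ps j'"
  then show "ps j = ps j'" using least_rep_mem(2) assms by metis
next
  assume "ps j = ps j'"
  then show "least_rep J ps j = least_rep J ps j'" using assms by (simp add: least_rep_def)
qed

lemma least_rep_in_PiE: "least_rep J ps \<in> PiE J (\<lambda>_. J)"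
proof (rule PiE_I)
  show "least_rep J ps j \<in> J" if "j \<in> J" for j using that by (rule least_rep_mem)
qed (simp add: least_rep_def)

lemma least_rep_idem:
  assumes "i \<in> least_rep J ps ` J"
  shows "least_rep J ps i = i"
proof -
  obtain j where j: "j \<in> J" "i = least_rep J ps j" using assms by blast
  have "least_rep J ps j \<in> J" "ps (least_rep J ps j) = ps j" using j(1) by (rule least_rep_mem)+
  then show ?thesis using least_rep_eq_iff j by blast
qed

lemma inj_on_least_rep_image: "inj_on ps (least_rep J ps ` J)"
proof
  fix i i' assume i: "i \<in> least_rep J ps ` J" "i' \<in> least_rep J ps ` J" and "ps i = ps i'"
  have "i \<in> J" "i' \<in> J" using i least_rep_mem(1) by auto
  with \<open>ps i = ps i'\<close> have "least_rep J ps i = least_rep J ps i'"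
    using least_rep_eq_iff by blast
  then show "i = i'" using least_rep_idem[OF i(1)] least_rep_idem[OF i(2)] by simp
qed

lemma image_least_rep_image: "ps ` least_rep J ps ` J = ps ` J"
  unfolding image_image using least_rep_mem(2) by (rule image_cong[OF refl])

lemma least_rep_class:
  assumes "i \<in> least_rep J ps ` J"
  shows "{j\<in>J. ps j = ps i} = {j\<in>J. least_rep J ps j = i}"
proof -
  have "i \<in> J" using assms least_rep_mem(1) by blast
  then show ?thesis using least_rep_eq_iff[of _ J i ps] least_rep_idem[OF assms] by auto
qed

lemma inj_on_restrict_least_rep_fiber:
  "inj_on (\<lambda>ps. restrict ps (r ` J)) {ps \<in> PiE J A. least_rep J ps = r}"
proof
  fix ps ps' assume ps: "ps \<in> {ps \<in> PiE J A. least_rep J ps = r}" "ps' \<in> {ps \<in> PiE J A. least_rep J ps = r}"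
    and eq: "restrict ps (r ` J) = restrict ps' (r ` J)"
  show "ps = ps'"
  proof (rule PiE_ext[of ps J A])
    fix j assume j: "j \<in> J"
    have "ps (r j) = ps' (r j)" using fun_cong[OF eq, of "r j"] j by simp
    moreover have "ps (r j) = ps j" "ps' (r j) = ps' j"
      using ps least_rep_mem(2)[OF j, of ps] least_rep_mem(2)[OF j, of ps'] by auto
    ultimately show "ps j = ps' j" by simp
  qed (use ps in auto)
qed

lemma abs_term_le_class_product:
  fixes ps :: "nat \<Rightarrow> nat" and g :: "nat \<Rightarrow> nat \<Rightarrow> real"
  assumes "finite J" "\<forall>j\<in>J. prime (ps j)"
    and "\<forall>j\<in>J. 0 \<le> h (ps j) / ps j \<and> h (ps j) / ps j \<le> 1" and g: "\<forall>j\<in>J. 0 \<le> g j (ps j)"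
  shows "\<bar>Hfun h (\<Prod>j\<in>J. ps j) * (\<Prod>j\<in>J. g j (ps j))\<bar>
    \<le> (\<Prod>i\<in>least_rep J ps ` J. density_variance h (ps i) * (\<Prod>j\<in>{j\<in>J. least_rep J ps j = i}. g j (ps i)))"
proof -
  let ?I = "least_rep J ps ` J"
  have g0: "0 \<le> (\<Prod>j\<in>J. g j (ps j))" using g by (intro prod_nonneg) auto
  have dv: "(\<Prod>q\<in>ps ` J. density_variance h q) = (\<Prod>i\<in>?I. density_variance h (ps i))"
    using prod.reindex[OF inj_on_least_rep_image[of ps J], of "density_variance h"]
    by (simp add: image_least_rep_image)
  have "(\<Prod>j\<in>J. g j (ps j)) = (\<Prod>i\<in>?I. \<Prod>j\<in>{j\<in>J. least_rep J ps j = i}. g j (ps j))"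
    using assms(1) by (intro prod.group[symmetric]) auto
  also have "\<dots> = (\<Prod>i\<in>?I. \<Prod>j\<in>{j\<in>J. least_rep J ps j = i}. g j (ps i))"
    by (intro prod.cong refl) (auto simp: least_rep_mem(2))
  finally have gp: "(\<Prod>j\<in>J. g j (ps j)) = \<dots>" .
  have "\<bar>Hfun h (\<Prod>j\<in>J. ps j) * (\<Prod>j\<in>J. g j (ps j))\<bar>
      = \<bar>Hfun h (\<Prod>j\<in>J. ps j)\<bar> * (\<Prod>j\<in>J. g j (ps j))"
    using g0 by (simp add: abs_mult)
  also have "\<dots> \<le> (\<Prod>q\<in>ps ` J. density_variance h q) * (\<Prod>j\<in>J. g j (ps j))"
    using abs_Hfun_prod_primes_le[OF assms(1-3)] g0 by (rule mult_right_mono)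
  finally show ?thesis by (simp only: dv gp prod.distrib)
qed

lemma sum_class_weighted_prod_le:
  fixes ps :: "nat \<Rightarrow> nat" and g :: "nat \<Rightarrow> nat \<Rightarrow> real"
  assumes "finite J" "\<forall>p\<in>P. prime p" "ps \<in> PiE J (\<lambda>_. P)" "squarefull (\<Prod>j\<in>J. ps j)"
    and "i \<in> least_rep J ps ` J"
    and w: "\<forall>p\<in>P. 0 \<le> density_variance h p"
    and g: "\<forall>j\<in>J. \<forall>p\<in>P. 0 \<le> g j p \<and> g j p \<le> M" and "M \<ge> 1"
    and K: "\<forall>j\<in>J. (\<Sum>p\<in>P. (g j p)^2 * density_variance h p) \<le> K"
  shows "(\<Sum>p\<in>P. density_variance h p * (\<Prod>j\<in>{j\<in>J. least_rep J ps j = i}. g j p)) \<le> M ^ card J * K"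
proof -
  define F where "F = {j\<in>J. least_rep J ps j = i}"
  have "i \<in> J" using assms(5) least_rep_mem(1) by blast
  then have "card F \<ge> 2"
    using squarefull_prod_primes_class_card[of J ps i] least_rep_class[OF assms(5)] assms(1-4)
    unfolding F_def by (auto simp: PiE_iff)
  moreover have "F \<subseteq> J" "finite F" using assms(1) unfolding F_def by auto
  ultimately have "(\<Sum>p\<in>P. density_variance h p * (\<Prod>j\<in>F. g j p)) \<le> M ^ (card F - 2) * K"
    using g K \<open>M \<ge> 1\<close> by (intro sum_weighted_prod_le[OF _ _ w]) auto
  also have "\<dots> \<le> M ^ card J * K"
  proof (rule mult_right_mono)
    show "M ^ (card F - 2) \<le> M ^ card J"
      using \<open>F \<subseteq> J\<close> assms(1) \<open>M \<ge> 1\<close> by (intro power_increasing) (auto dest: card_mono)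
    have "0 \<le> (\<Sum>p\<in>P. (g i p)^2 * density_variance h p)" using w by (intro sum_nonneg) auto
    then show "0 \<le> K" using K \<open>i \<in> J\<close> by fastforce
  qed
  finally show ?thesis unfolding F_def .
qed

lemma sum_least_rep_fiber_le_prod_sums:
  fixes J :: "nat set" and g :: "nat \<Rightarrow> nat \<Rightarrow> real"
  assumes J: "finite J" and P: "finite P" "\<forall>p\<in>P. prime p"
    and h: "\<forall>p\<in>P. 0 \<le> h p / p \<and> h p / p \<le> 1"
    and g: "\<forall>j\<in>J. \<forall>p\<in>P. 0 \<le> g j p" and r: "r ` J \<subseteq> J" and S: "S \<subseteq> PiE J (\<lambda>_. P)"
  shows "(\<Sum>ps\<in>{ps\<in>S. least_rep J ps = r}. \<bar>Hfun h (\<Prod>j\<in>J. ps j) * (\<Prod>j\<in>J. g j (ps j))\<bar>)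
    \<le> (\<Prod>i\<in>r ` J. \<Sum>p\<in>P. density_variance h p * (\<Prod>j\<in>{j\<in>J. r j = i}. g j p))"
proof -
  define Fib where "Fib = {ps\<in>S. least_rep J ps = r}"
  define I where "I = r ` J"
  define B where "B = (\<lambda>q. \<Prod>i\<in>I. density_variance h (q i) * (\<Prod>j\<in>{j\<in>J. r j = i}. g j (q i)))"
  have Fib: "ps \<in> PiE J (\<lambda>_. P)" "least_rep J ps = r" if "ps \<in> Fib" for ps
    using that S unfolding Fib_def by auto
  have w: "\<forall>p\<in>P. 0 \<le> density_variance h p" using h density_variance_nonneg by blast
  have finI: "finite I" using J unfolding I_def by simp
  have IJ: "I \<subseteq> J" using r unfolding I_def .
  have "(\<Sum>ps\<in>Fib. \<bar>Hfun h (\<Prod>j\<in>J. ps j) * (\<Prod>j\<in>J. g j (ps j))\<bar>) \<le> (\<Sum>ps\<in>Fib. B (restrict ps I))"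
  proof (intro sum_mono)
    fix ps assume "ps \<in> Fib"
    note ps = Fib[OF this]
    have psP: "\<forall>j\<in>J. ps j \<in> P" using ps(1) by blast
    have "\<forall>j\<in>J. prime (ps j)" "\<forall>j\<in>J. 0 \<le> h (ps j) / ps j \<and> h (ps j) / ps j \<le> 1"
      "\<forall>j\<in>J. 0 \<le> g j (ps j)"
      using psP P(2) h g by blast+
    from abs_term_le_class_product[of J ps h g, OF J this]
    have "\<bar>Hfun h (\<Prod>j\<in>J. ps j) * (\<Prod>j\<in>J. g j (ps j))\<bar> \<le> B ps"
      unfolding B_def I_def ps(2) .
    also have "B ps = B (restrict ps I)" unfolding B_def by (intro prod.cong refl) auto
    finally show "\<bar>Hfun h (\<Prod>j\<in>J. ps j) * (\<Prod>j\<in>J. g j (ps j))\<bar> \<le> B (restrict ps I)" .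
  qed
  also have "\<dots> = (\<Sum>q\<in>(\<lambda>ps. restrict ps I) ` Fib. B q)"
  proof -
    have "inj_on (\<lambda>ps. restrict ps I) Fib"
      using Fib unfolding I_def by (intro inj_on_subset[OF inj_on_restrict_least_rep_fiber]) auto
    from sum.reindex[OF this, of B] show ?thesis by simp
  qed
  also have "\<dots> \<le> (\<Sum>q\<in>PiE I (\<lambda>_. P). B q)"
  proof (intro sum_mono2)
    show "finite (PiE I (\<lambda>_. P))" using P finI by (intro finite_PiE) auto
    show "(\<lambda>ps. restrict ps I) ` Fib \<subseteq> PiE I (\<lambda>_. P)"
      using Fib(1) IJ by (fastforce simp: restrict_PiE_iff)
    show "0 \<le> B q" if "q \<in> PiE I (\<lambda>_. P) - (\<lambda>ps. restrict ps I) ` Fib" for q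
      using that w g IJ unfolding B_def by (intro prod_nonneg mult_nonneg_nonneg) (auto simp: PiE_iff)
  qed
  also have "\<dots> = (\<Prod>i\<in>I. \<Sum>p\<in>P. density_variance h p * (\<Prod>j\<in>{j\<in>J. r j = i}. g j p))"
    unfolding B_def by (rule prod_sum_PiE[symmetric]) (use finI P in auto)
  finally show ?thesis unfolding Fib_def I_def .
qed

lemma sum_least_rep_fiber_le:
  fixes J :: "nat set" and g :: "nat \<Rightarrow> nat \<Rightarrow> real" and c :: nat
  assumes J: "finite J" and P: "finite P" "\<forall>p\<in>P. prime p"
    and h: "\<forall>p\<in>P. 0 \<le> h p / p \<and> h p / p \<le> 1"
    and g: "\<forall>j\<in>J. \<forall>p\<in>P. 0 \<le> g j p \<and> g j p \<le> M" and "M \<ge> 1"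
    and K: "\<forall>j\<in>J. (\<Sum>p\<in>P. (g j p)^2 * density_variance h p) \<le> K" and "K \<ge> 1"
    and S: "S \<subseteq> {ps \<in> PiE J (\<lambda>_. P). squarefull (\<Prod>j\<in>J. ps j) \<and> card (ps ` J) \<le> c}"
  shows "(\<Sum>ps\<in>{ps\<in>S. least_rep J ps = r}. \<bar>Hfun h (\<Prod>j\<in>J. ps j) * (\<Prod>j\<in>J. g j (ps j))\<bar>)
    \<le> (M ^ card J * K) ^ c"
proof (cases "\<exists>ps0\<in>S. least_rep J ps0 = r")
  case False
  then have "{ps\<in>S. least_rep J ps = r} = {}" by blast
  moreover have "0 \<le> (M ^ card J * K) ^ c" using \<open>M \<ge> 1\<close> \<open>K \<ge> 1\<close> by simp
  ultimately show ?thesis by (simp only: sum.empty)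
next
  case True
  then obtain ps0 where ps0: "ps0 \<in> S" "least_rep J ps0 = r" by blast
  have w: "\<forall>p\<in>P. 0 \<le> density_variance h p" using h density_variance_nonneg by blast
  have "r ` J \<subseteq> J" using least_rep_mem(1)[of _ J ps0] unfolding ps0(2) by blast
  then have "(\<Sum>ps\<in>{ps\<in>S. least_rep J ps = r}. \<bar>Hfun h (\<Prod>j\<in>J. ps j) * (\<Prod>j\<in>J. g j (ps j))\<bar>)
      \<le> (\<Prod>i\<in>r ` J. \<Sum>p\<in>P. density_variance h p * (\<Prod>j\<in>{j\<in>J. r j = i}. g j p))"
    using S g by (intro sum_least_rep_fiber_le_prod_sums[OF J P h]) auto
  also have "\<dots> \<le> (\<Prod>i\<in>r ` J. M ^ card J * K)"
  proof (intro prod_mono conjI)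
    fix i assume "i \<in> r ` J"
    show "0 \<le> (\<Sum>p\<in>P. density_variance h p * (\<Prod>j\<in>{j\<in>J. r j = i}. g j p))"
      using w g by (intro sum_nonneg mult_nonneg_nonneg prod_nonneg) auto
    show "(\<Sum>p\<in>P. density_variance h p * (\<Prod>j\<in>{j\<in>J. r j = i}. g j p)) \<le> M ^ card J * K"
      using sum_class_weighted_prod_le[OF J P(2) _ _ _ w g \<open>M \<ge> 1\<close> K, of ps0 i] ps0 S \<open>i \<in> r ` J\<close>
      by blast
  qed
  also have "\<dots> \<le> (M ^ card J * K) ^ c"
  proof -
    have "card (r ` J) = card (ps0 ` J)"
      using card_image[OF inj_on_least_rep_image[of ps0 J]] image_least_rep_image[of ps0 J] ps0(2)
      by simp
    then have "card (r ` J) \<le> c" using ps0(1) S by auto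
    moreover have "1 \<le> M ^ card J * K"
      using \<open>M \<ge> 1\<close> \<open>K \<ge> 1\<close> one_le_power mult_mono[of 1 "M ^ card J" 1 K] by fastforce
    ultimately show ?thesis by (simp add: power_increasing)
  qed
  finally show ?thesis .
qed

lemma sum_squarefull_tuples_le:
  fixes J :: "nat set" and g :: "nat \<Rightarrow> nat \<Rightarrow> real" and M K :: real and c :: nat
  assumes J: "finite J" and P: "finite P" "\<forall>p\<in>P. prime p"
    and h: "\<forall>p\<in>P. 0 \<le> h p / p \<and> h p / p \<le> 1"
    and g: "\<forall>j\<in>J. \<forall>p\<in>P. 0 \<le> g j p \<and> g j p \<le> M" and "M \<ge> 1"
    and K: "\<forall>j\<in>J. (\<Sum>p\<in>P. (g j p)^2 * density_variance h p) \<le> K" and "K \<ge> 1"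
  shows "\<bar>\<Sum>ps\<in>{ps \<in> PiE J (\<lambda>_. P). squarefull (\<Prod>j\<in>J. ps j) \<and> card (ps ` J) \<le> c}.
            Hfun h (\<Prod>j\<in>J. ps j) * (\<Prod>j\<in>J. g j (ps j))\<bar>
    \<le> real (card J) ^ card J * (M ^ card J * K) ^ c"
proof -
  define T where "T = {ps \<in> PiE J (\<lambda>_. P). squarefull (\<Prod>j\<in>J. ps j) \<and> card (ps ` J) \<le> c}"
  define t where "t = (\<lambda>ps. \<bar>Hfun h (\<Prod>j\<in>J. ps j) * (\<Prod>j\<in>J. g j (ps j))\<bar>)"
  have finR: "finite (PiE J (\<lambda>_. J))" using J by (intro finite_PiE)
  have "finite T"
    using finite_PiE[OF J, of "\<lambda>_. P"] P(1) unfolding T_def by (auto intro: finite_subset)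
  have "\<bar>\<Sum>ps\<in>T. Hfun h (\<Prod>j\<in>J. ps j) * (\<Prod>j\<in>J. g j (ps j))\<bar> \<le> (\<Sum>ps\<in>T. t ps)"
    unfolding t_def by (rule sum_abs)
  also have "\<dots> = (\<Sum>r\<in>PiE J (\<lambda>_. J). \<Sum>ps\<in>{ps\<in>T. least_rep J ps = r}. t ps)"
    using least_rep_in_PiE by (intro sum.group[OF \<open>finite T\<close> finR, symmetric]) blast
  also have "\<dots> \<le> (\<Sum>r\<in>PiE J (\<lambda>_. J). (M ^ card J * K) ^ c)"
    unfolding t_def by (intro sum_mono sum_least_rep_fiber_le[OF J P h g \<open>M \<ge> 1\<close> K \<open>K \<ge> 1\<close>])
      (simp add: T_def)
  also have "\<dots> = real (card J) ^ card J * (M ^ card J * K) ^ c"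
    by (simp add: card_PiE J)
  finally show ?thesis unfolding T_def .
qed

lemma real_lt_half_iff:
  fixes k n :: nat
  assumes "k > 0"
  shows "real n < real k / 2 \<longleftrightarrow> n \<le> (k - 1) div 2"
proof -
  have "real n < real k / 2 \<longleftrightarrow> 2 * n < k" by linarith
  also have "\<dots> \<longleftrightarrow> n \<le> (k - 1) div 2" using assms by presburger
  finally show ?thesis .
qed

lemma powr_half_exponent_eq_power:
  fixes K :: real and k :: nat
  assumes "K > 0" "k > 0"
  shows "(if even k then K powr (real k / 2 - 1) else K powr ((real k - 1) / 2)) = K ^ ((k - 1) div 2)"
proof -
  have "(if even k then real k / 2 - 1 else (real k - 1) / 2) = real ((k - 1) div 2)"
  proof (cases "even k")
    case True
    then obtain b where "k = 2 * b" "b > 0" using assms(2) by (auto elim!: evenE)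
    moreover have "(2 * b - 1) div 2 = b - 1" by presburger
    ultimately show ?thesis using True by (simp add: of_nat_diff)
  next
    case False
    then obtain b where "k = 2 * b + 1" by (auto elim!: oddE)
    then show ?thesis by simp
  qed
  then show ?thesis using assms(1) by (auto simp: powr_realpow[symmetric] split: if_splits)
qed

lemma squarefull_tuple_sum_le:
  fixes k :: nat and G K :: real and g :: "nat \<Rightarrow> nat \<Rightarrow> real"
  assumes "k > 0" and P: "finite P" "\<forall>p\<in>P. prime p"
    and hd: "\<forall>d. d > 0 \<longrightarrow> 0 \<le> h d \<and> h d \<le> real d"
    and g: "\<forall>j\<in>{1..k}. \<forall>p\<in>P. 0 \<le> g j p \<and> g j p \<le> G"
    and K_def: "K = Max ((\<lambda>i. sigmaP_sq P h (g i)) ` {1..k})" and "K \<ge> 1"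
  shows "\<bar>\<Sum>ps \<in> {ps \<in> PiE {1..k} (\<lambda>_. P).
              squarefull (\<Prod>i\<in>{1..k}. ps i) \<and> real (card (ps ` {1..k})) < real k / 2}.
          Hfun h (\<Prod>i\<in>{1..k}. ps i) * (\<Prod>j\<in>{1..k}. g j (ps j))\<bar>
    \<le> real k ^ k * max 1 G ^ (k * ((k - 1) div 2)) *
       (if even k then K powr (real k / 2 - 1) else K powr ((real k - 1) / 2))"
proof -
  have h: "\<forall>p\<in>P. 0 \<le> h p / p \<and> h p / p \<le> 1"
  proof
    fix p assume "p \<in> P"
    then have "p > 0" using P(2) prime_gt_0_nat by blast
    then show "0 \<le> h p / p \<and> h p / p \<le> 1" using hd by (simp add: divide_le_eq_1)
  qed
  have gM: "\<forall>j\<in>{1..k}. \<forall>p\<in>P. 0 \<le> g j p \<and> g j p \<le> max 1 G" using g by fastforce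
  have Kj: "\<forall>j\<in>{1..k}. (\<Sum>p\<in>P. (g j p)^2 * density_variance h p) \<le> K"
    unfolding K_def sigmaP_sq_eq[symmetric] by (auto intro: Max_ge)
  have "K > 0" using \<open>K \<ge> 1\<close> by simp
  show ?thesis
    unfolding real_lt_half_iff[OF \<open>k > 0\<close>] powr_half_exponent_eq_power[OF \<open>K > 0\<close> \<open>k > 0\<close>]
    using sum_squarefull_tuples_le[OF _ P h gM _ Kj \<open>K \<ge> 1\<close>, of "(k - 1) div 2"]
    by (simp add: power_mult_distrib power_mult mult.assoc)
qed

theorem mainTheorem11:
  fixes k :: nat and G :: real
  assumes "k > 0" and "G > 0"
  shows "\<exists>C::real. \<forall>(P::nat set) (h::nat \<Rightarrow> real) (g::nat \<Rightarrow> nat \<Rightarrow> real).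
     finite P \<longrightarrow> (\<forall>p\<in>P. prime p) \<longrightarrow>
     multiplicative_fn h \<longrightarrow> (\<forall>d. d > 0 \<longrightarrow> 0 \<le> h d \<and> h d \<le> real d) \<longrightarrow>
     (\<forall>j\<in>{1..k}. strongly_additive (g j)) \<longrightarrow>
     (\<forall>j\<in>{1..k}. \<forall>p\<in>P. 0 \<le> g j p \<and> g j p \<le> G) \<longrightarrow>
     (let K = Max ((\<lambda>i. sigmaP_sq P h (g i)) ` {1..k}) in
       K \<ge> 1 \<longrightarrow>
       \<bar>\<Sum>ps \<in> {ps \<in> PiE {1..k} (\<lambda>_. P).
              squarefull (\<Prod>i\<in>{1..k}. ps i) \<and> real (card (ps ` {1..k})) < real k / 2}.
          Hfun h (\<Prod>i\<in>{1..k}. ps i) * (\<Prod>j\<in>{1..k}. g j (ps j))\<bar>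
       \<le> C * (if even k then K powr (real k / 2 - 1) else K powr ((real k - 1) / 2)))"
  unfolding Let_def
  by (intro exI[of _ "real k ^ k * max 1 G ^ (k * ((k - 1) div 2))"] allI impI
      squarefull_tuple_sum_le[OF assms(1)]) auto

end
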